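(* Let $p$ be a prime and let $f(t)\in\mathbb{Q}_p[[t]]$ with $f'(t)=\sum_{i\ge0}a_it^i\in\mathbb{Z}_p[[t]]$ and constant term $c\in\mathbb{Z}_p$. Let $\lambda=\min\big(\{v_p(a_{i-1}p^{i}/i)\}_{i\geq1}\cup\{v_p(c)\}\big)$ (assumed finite) and let $F(x)=f(px)/p^{\lambda}\in\mathbb{Z}_p[[x]]$ be the associated normalized power series, and assume $F$ converges on $\mathbb{Z}_p$. Fix a positive integer $N$, let $M=\min\{m\in\mathbb{Z}_{\ge1}: m-\lambda-\log_p(m)>N\}$, and write $F=F_M+F_\infty$ where $F_M$ consists of the terms of $F$ of degree at most $M$. Let $r\in\mathbb{Z}/p^N\mathbb{Z}$ be such that $F$ satisfies Hensel's lemma for $r$, and let $\tilde r\in\mathbb{Z}_p$ be the unique zero of $F$ lifting $r$ with $|r-\tilde r|_p<|F_M'(r)|_p$. Then $\tilde r\equiv r \pmod{p^{\,N-v_p(F_M'(r))}}$.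
   Context: $v_p$ is the $p$-adic valuation and $|\cdot|_p$ the $p$-adic absolute value; $\log_p$ is the real logarithm to base $p$. For $G\in\mathbb{Z}_p[[x]]$ converging on $\mathbb{Z}_p$ and $N$ a positive integer, let $\bar G$ denote the reduction of $G$ modulo $p^N$ (evaluation at $r\in\mathbb{Z}/p^N\mathbb{Z}$ means evaluating $G$ at any integer representative of $r$ and reducing mod $p^N$). One says $G$ satisfies Hensel's lemma for $r\in\mathbb{Z}/p^N\mathbb{Z}$ if $\bar G(r)\equiv 0 \pmod{p^N}$ and $\bar G'(r)^2\not\equiv 0\pmod{p^N}$. In the claim, $r$ is identified with an integer representative when computing $|r-\tilde r|_p$, $F_M'(r)$ and $v_p(F_M'(r))$. *)

theory Defs
  imports Complex_Main "HOL-Library.Extended_Nat" "HOL-Computational_Algebra.Primes"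
begin

text \<open>p-adic integers Z_p, represented by their compatible sequences of residues:
  x n is the residue of x modulo p^n (in [0, p^n)).\<close>

definition padic :: "int \<Rightarrow> (nat \<Rightarrow> int) \<Rightarrow> bool" where
  "padic p x \<longleftrightarrow> (\<forall>n. x n = x (Suc n) mod p ^ n)"

definition pof_int :: "int \<Rightarrow> int \<Rightarrow> (nat \<Rightarrow> int)" where
  "pof_int p k = (\<lambda>n. k mod p ^ n)"

definition padd :: "int \<Rightarrow> (nat \<Rightarrow> int) \<Rightarrow> (nat \<Rightarrow> int) \<Rightarrow> (nat \<Rightarrow> int)" where
  "padd p x y = (\<lambda>n. (x n + y n) mod p ^ n)"

definition psub :: "int \<Rightarrow> (nat \<Rightarrow> int) \<Rightarrow> (nat \<Rightarrow> int) \<Rightarrow> (nat \<Rightarrow> int)" where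
  "psub p x y = (\<lambda>n. (x n - y n) mod p ^ n)"

definition pmul :: "int \<Rightarrow> (nat \<Rightarrow> int) \<Rightarrow> (nat \<Rightarrow> int) \<Rightarrow> (nat \<Rightarrow> int)" where
  "pmul p x y = (\<lambda>n. (x n * y n) mod p ^ n)"

text \<open>p-adic valuation v_p on Z_p (infinity for 0); v_p(x) = largest n with x = 0 mod p^n.\<close>
definition pval :: "int \<Rightarrow> (nat \<Rightarrow> int) \<Rightarrow> enat" where
  "pval p x = (if (\<forall>n. x n = 0) then \<infinity> else enat (LEAST n. x (Suc n) \<noteq> 0))"

text \<open>Power series over Z_p are given by coefficient sequences b :: nat => Z_p.
  Partial sums  sum_{i<K} b_i x^i  computed in Z_p.\<close>
definition ps_partial :: "int \<Rightarrow> (nat \<Rightarrow> nat \<Rightarrow> int) \<Rightarrow> (nat \<Rightarrow> int) \<Rightarrow> nat \<Rightarrow> (nat \<Rightarrow> int)" where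
  "ps_partial p b x K = (\<lambda>n. (\<Sum>i<K. b i n * x n ^ i) mod p ^ n)"

definition ps_sums :: "int \<Rightarrow> (nat \<Rightarrow> nat \<Rightarrow> int) \<Rightarrow> (nat \<Rightarrow> int) \<Rightarrow> (nat \<Rightarrow> int) \<Rightarrow> bool" where
  "ps_sums p b x s \<longleftrightarrow> (\<forall>n. \<exists>K0. \<forall>K\<ge>K0. ps_partial p b x K n = s n)"

definition ps_deriv :: "int \<Rightarrow> (nat \<Rightarrow> nat \<Rightarrow> int) \<Rightarrow> (nat \<Rightarrow> nat \<Rightarrow> int)" where
  "ps_deriv p b = (\<lambda>i. pmul p (pof_int p (int (Suc i))) (b (Suc i)))"

definition ps_trunc :: "(nat \<Rightarrow> nat \<Rightarrow> int) \<Rightarrow> nat \<Rightarrow> (nat \<Rightarrow> nat \<Rightarrow> int)" where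
  "ps_trunc b M = (\<lambda>i. if i \<le> M then b i else (\<lambda>n. 0))"

definition hensel_at :: "int \<Rightarrow> nat \<Rightarrow> (nat \<Rightarrow> nat \<Rightarrow> int) \<Rightarrow> int \<Rightarrow> bool" where
  "hensel_at p N b r \<longleftrightarrow>
     (\<exists>s. ps_sums p b (pof_int p r) s \<and> s N = 0) \<and>
     (\<exists>s'. ps_sums p (ps_deriv p b) (pof_int p r) s' \<and> (s' N) ^ 2 mod p ^ N \<noteq> 0)"

text \<open>lambda = min({v_p(a_(i-1) p^i / i)}_(i>=1) union {v_p(c)}),
  using v_p(a p^i / i) = v_p(a) + i - v_p(i).\<close>
definition plambda :: "int \<Rightarrow> (nat \<Rightarrow> nat \<Rightarrow> int) \<Rightarrow> (nat \<Rightarrow> int) \<Rightarrow> enat" where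
  "plambda p a c = min (INF i\<in>{1::nat..}. pval p (a (i - 1)) + enat (i - multiplicity p (int i))) (pval p c)"

definition Mbound :: "int \<Rightarrow> nat \<Rightarrow> nat \<Rightarrow> nat" where
  "Mbound p lam N = (LEAST m::nat. 1 \<le> m \<and> real m - real lam - log (real_of_int p) (real m) > real N)"

end

theory Submission
  imports Defs "HOL-Number_Theory.Cong"
begin

(* Put D = F_M'(r) and d = v_p(D); only d < N needs an argument. Let t and rho be integer
   representatives of r~ and r modulo p^N. Both are roots modulo p^N of a long enough truncation
   P of F, and P'(rho) = D modulo p^N: the relation i p^lambda b_i = a_(i-1) p^i makes p^N divide
   i b_i once i >= N + lambda, and M > N + lambda. By Taylor's formula h = t - rho satisfies
   h^2 | P(t) - P(rho) - h P'(rho). As v(h) > d = v(P'(rho)), this gives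
   v(h) + d = v(h P'(rho)) >= min (v(P(t) - P(rho)), 2 v(h)) >= min (N, v(h) + d + 1),
   hence v(h) >= N - d. Of the hypotheses on F only that coefficient relation and the two root
   conditions are used. *)

lemma power_Suc_diff_taylor_dvd:
  fixes x y :: "'a::comm_ring_1"
  shows "(x - y)\<^sup>2 dvd x ^ Suc i - y ^ Suc i - of_nat (Suc i) * y ^ i * (x - y)"
proof (induction i)
  case (Suc i)
  have "x ^ Suc (Suc i) - y ^ Suc (Suc i) - of_nat (Suc (Suc i)) * y ^ Suc i * (x - y)
      = x * (x ^ Suc i - y ^ Suc i - of_nat (Suc i) * y ^ i * (x - y))
        + (x - y)\<^sup>2 * (of_nat (Suc i) * y ^ i)"
    by (simp add: algebra_simps power2_eq_square)
  then show ?case using Suc by (simp add: dvd_add)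
qed simp

lemma sum_power_taylor_dvd:
  fixes B :: "nat \<Rightarrow> 'a::comm_ring_1"
  shows "(x - y)\<^sup>2 dvd (\<Sum>i<Suc K. B i * x ^ i) - (\<Sum>i<Suc K. B i * y ^ i)
           - (x - y) * (\<Sum>i<K. of_nat (Suc i) * B (Suc i) * y ^ i)"
proof -
  have "(\<Sum>i<Suc K. B i * x ^ i) - (\<Sum>i<Suc K. B i * y ^ i)
          - (x - y) * (\<Sum>i<K. of_nat (Suc i) * B (Suc i) * y ^ i)
      = (\<Sum>i<K. B (Suc i) * (x ^ Suc i - y ^ Suc i - of_nat (Suc i) * y ^ i * (x - y)))"
    unfolding sum.lessThan_Suc_shift
    by (simp add: sum_subtractf[symmetric] sum_distrib_left algebra_simps)
  also have "(x - y)\<^sup>2 dvd \<dots>"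
    by (intro dvd_sum dvd_mult power_Suc_diff_taylor_dvd)
  finally show ?thesis .
qed

lemma increment_dvd_of_derivative_valuation:
  fixes p h A S :: int
  assumes "prime p" and quad: "h\<^sup>2 dvd A - h * S" and "p ^ N dvd A"
    and "p ^ Suc d dvd h" and "p ^ d dvd S" and "\<not> p ^ Suc d dvd S"
  shows "p ^ (N - d) dvd h"
proof (rule ccontr)
  assume not_dvd: "\<not> p ^ (N - d) dvd h"
  have "h \<noteq> 0" "S \<noteq> 0" "\<not> is_unit p"
    using not_dvd \<open>\<not> p ^ Suc d dvd S\<close> \<open>prime p\<close> by auto
  define e where "e = multiplicity p h"
  have "multiplicity p S = d" using assms(5,6) by (rule multiplicity_eqI)
  have "Suc d \<le> e"
    unfolding e_def using assms(4) \<open>h \<noteq> 0\<close> \<open>\<not> is_unit p\<close> by (intro multiplicity_geI) auto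
  have "e < N - d"
    using not_dvd multiplicity_dvd'[of "N - d" p h] unfolding e_def by linarith
  have "p ^ (e + d + 1) dvd p ^ (2 * e)"
    by (rule le_imp_power_dvd) (use \<open>Suc d \<le> e\<close> in linarith)
  moreover have "p ^ (e + d + 1) dvd p ^ N"
    by (rule le_imp_power_dvd) (use \<open>e < N - d\<close> in linarith)
  moreover have "p ^ (2 * e) dvd h\<^sup>2"
    unfolding e_def power_mult power_mult_distrib mult.commute[of 2]
    by (intro dvd_power_same multiplicity_dvd)
  ultimately have "p ^ (e + d + 1) dvd A - h * S" "p ^ (e + d + 1) dvd A"
    using quad \<open>p ^ N dvd A\<close> dvd_trans by blast+
  then have "p ^ (e + d + 1) dvd A - (A - h * S)"
    by (rule dvd_diff[rotated])
  then have "p ^ (e + d + 1) dvd h * S"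
    by simp
  then have "e + d + 1 \<le> multiplicity p (h * S)"
    using \<open>h \<noteq> 0\<close> \<open>S \<noteq> 0\<close> \<open>\<not> is_unit p\<close> by (intro multiplicity_geI) auto
  moreover have "multiplicity p (h * S) = e + d"
    using prime_elem_multiplicity_mult_distrib[OF prime_imp_prime_elem[OF \<open>prime p\<close>]
        \<open>h \<noteq> 0\<close> \<open>S \<noteq> 0\<close>]
      \<open>multiplicity p S = d\<close> e_def by simp
  ultimately show False by simp
qed

lemma sum_power_roots_congruent:
  fixes p t \<rho> :: int and B :: "nat \<Rightarrow> int"
  assumes "prime p"
    and "p ^ N dvd (\<Sum>i<Suc K. B i * t ^ i)" and "p ^ N dvd (\<Sum>i<Suc K. B i * \<rho> ^ i)"
    and "p ^ Suc d dvd t - \<rho>"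
    and "p ^ d dvd (\<Sum>i<K. int (Suc i) * B (Suc i) * \<rho> ^ i)"
    and "\<not> p ^ Suc d dvd (\<Sum>i<K. int (Suc i) * B (Suc i) * \<rho> ^ i)"
  shows "p ^ (N - d) dvd t - \<rho>"
  using assms(1) sum_power_taylor_dvd[where x = t and y = \<rho> and K = K and B = B]
    dvd_diff[OF assms(2,3)] assms(4-6)
  by (rule increment_dvd_of_derivative_valuation)

lemma padic_cong_Suc: "padic p x \<Longrightarrow> [x (Suc n) = x n] (mod p ^ n)"
  unfolding padic_def cong_def by (metis mod_mod_trivial)

lemma padic_coherent:
  assumes "padic p x" "j \<le> n"
  shows "x j = x n mod p ^ j"
  using assms(2)
proof (induction n rule: dec_induct)
  case base
  have "x j = x (Suc j) mod p ^ j" using assms(1) unfolding padic_def by blast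
  then show ?case by simp
next
  case (step n)
  have "x n = x (Suc n) mod p ^ n" using assms(1) unfolding padic_def by blast
  moreover have "p ^ j dvd p ^ n" using step.hyps(1) by (rule le_imp_power_dvd)
  ultimately show ?case using step.IH by (simp add: mod_mod_cancel)
qed

lemma padic_of_cong:
  assumes "\<And>n. X n = u n mod p ^ n" "\<And>n. [u (Suc n) = u n] (mod p ^ n)"
  shows "padic p X"
  unfolding padic_def
proof
  fix n
  have "p ^ n dvd p ^ Suc n" by (simp add: le_imp_power_dvd)
  then show "X n = X (Suc n) mod p ^ n"
    using assms(2)[of n] by (simp add: assms(1) mod_mod_cancel cong_def)
qed

lemma padic_zero: "padic p (\<lambda>_. 0)"
  unfolding padic_def by simp

lemma padic_pof_int: "padic p (pof_int p k)"
  by (rule padic_of_cong[where u = "\<lambda>_. k"]) (simp_all add: pof_int_def)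

lemma padic_pmul: "padic p x \<Longrightarrow> padic p y \<Longrightarrow> padic p (pmul p x y)"
  unfolding pmul_def
  by (rule padic_of_cong[where u = "\<lambda>n. x n * y n"]) (simp_all add: cong_mult padic_cong_Suc)

lemma padic_psub: "padic p x \<Longrightarrow> padic p y \<Longrightarrow> padic p (psub p x y)"
  unfolding psub_def
  by (rule padic_of_cong[where u = "\<lambda>n. x n - y n"]) (simp_all add: cong_diff padic_cong_Suc)

lemma padic_ps_partial:
  assumes "\<And>i. padic p (b i)" "padic p x"
  shows "padic p (ps_partial p b x K)"
  unfolding ps_partial_def
  by (rule padic_of_cong[where u = "\<lambda>n. \<Sum>i<K. b i n * x n ^ i"])
    (simp_all add: cong_sum cong_mult cong_pow padic_cong_Suc assms)

lemma padic_ps_trunc: "(\<And>i. padic p (b i)) \<Longrightarrow> padic p (ps_trunc b M i)"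
  unfolding ps_trunc_def using padic_zero by simp

lemma padic_ps_deriv: "(\<And>i. padic p (b i)) \<Longrightarrow> padic p (ps_deriv p b i)"
  unfolding ps_deriv_def by (intro padic_pmul padic_pof_int)

lemma pval_ge_iff:
  assumes "padic p x"
  shows "enat m \<le> pval p x \<longleftrightarrow> x m = 0"
proof (cases "\<forall>n. x n = 0")
  case False
  define v where "v = (LEAST n. x (Suc n) \<noteq> 0)"
  have "x 0 = 0" using assms unfolding padic_def by (metis mod_by_1 power_0)
  with False obtain k where "x (Suc k) \<noteq> 0" by (metis not0_implies_Suc)
  then have v: "x (Suc v) \<noteq> 0" unfolding v_def by (rule LeastI)
  have "m \<le> v \<longleftrightarrow> x m = 0"
  proof
    assume "m \<le> v"
    then show "x m = 0" using \<open>x 0 = 0\<close> not_less_Least unfolding v_def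
      by (cases m) (auto simp: Suc_le_eq)
  next
    assume "x m = 0"
    show "m \<le> v"
    proof (rule ccontr)
      assume "\<not> m \<le> v"
      then have "x (Suc v) = x m mod p ^ Suc v" by (intro padic_coherent[OF assms]) simp
      with v \<open>x m = 0\<close> show False by simp
    qed
  qed
  then show ?thesis using False unfolding pval_def v_def by simp
qed (simp add: pval_def)

lemma pval_ge_iff_dvd:
  assumes "padic p x" "m \<le> n"
  shows "enat m \<le> pval p x \<longleftrightarrow> p ^ m dvd x n"
  using pval_ge_iff[OF assms(1)] padic_coherent[OF assms] by (simp add: mod_eq_0_iff_dvd)

lemma pval_psub_ge_iff_dvd:
  assumes "padic p x" "padic p y" "m \<le> n"
  shows "enat m \<le> pval p (psub p x y) \<longleftrightarrow> p ^ m dvd x n - y n"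
  using pval_ge_iff_dvd[OF padic_psub[OF assms(1,2)] assms(3)] assms(3)
  by (simp add: psub_def dvd_mod_iff le_imp_power_dvd)

lemma pval_eq_enat_dvd:
  assumes "padic p x" "pval p x = enat d" "d < n"
  shows "p ^ d dvd x n" "\<not> p ^ Suc d dvd x n"
  using pval_ge_iff_dvd[OF assms(1), of d n] pval_ge_iff_dvd[OF assms(1), of "Suc d" n] assms(2,3)
  by simp_all

lemma ps_sums_root_dvd:
  assumes "ps_sums p b x s" "s n = 0"
  shows "\<exists>K0. \<forall>K\<ge>K0. p ^ n dvd (\<Sum>i<K. b i n * x n ^ i)"
proof -
  obtain K0 where "\<forall>K\<ge>K0. ps_partial p b x K n = s n"
    using assms(1) unfolding ps_sums_def by blast
  then show ?thesis using assms(2) by (auto simp: ps_partial_def dvd_eq_mod_eq_0)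
qed

lemma ps_deriv_trunc_beyond:
  assumes "M \<le> i"
  shows "ps_deriv p (ps_trunc b M) i n = 0"
  using assms by (simp add: ps_deriv_def ps_trunc_def pmul_def)

lemma ps_partial_deriv_trunc_cong:
  assumes high: "\<And>i. M < i \<Longrightarrow> p ^ n dvd int i * b i n" and "M \<le> K"
  shows "[ps_partial p (ps_deriv p (ps_trunc b M)) x (Suc M) n
          = (\<Sum>i<K. int (Suc i) * b (Suc i) n * x n ^ i)] (mod p ^ n)"
proof -
  define T where "T i = ps_deriv p (ps_trunc b M) i n * x n ^ i" for i
  have vanish: "T i = 0" if "M \<le> i" for i
    using that by (simp add: T_def ps_deriv_trunc_beyond)
  have "(\<Sum>i<Suc M. T i) = (\<Sum>i<M. T i)" "(\<Sum>i<K. T i) = (\<Sum>i<M. T i)"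
    using \<open>M \<le> K\<close> by (auto intro!: sum.mono_neutral_left[symmetric] vanish)
  then have "ps_partial p (ps_deriv p (ps_trunc b M)) x (Suc M) n = (\<Sum>i<K. T i) mod p ^ n"
    by (simp add: ps_partial_def flip: T_def)
  moreover have "[T i = int (Suc i) * b (Suc i) n * x n ^ i] (mod p ^ n)" for i
  proof (cases "i < M")
    case True
    then show ?thesis
      by (simp add: T_def ps_deriv_def ps_trunc_def pmul_def pof_int_def cong_def mod_mult_left_eq)
  next
    case False
    then have "p ^ n dvd int (Suc i) * b (Suc i) n" by (intro high) simp
    then show ?thesis
      using vanish False by (simp add: cong_0_iff cong_sym)
  qed
  ultimately show ?thesis by (simp add: cong_sum)
qed

lemma index_mult_coeff_dvd:
  fixes p :: int
  assumes "p \<noteq> 0" "padic p \<beta>"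
    and scaled: "pmul p (pof_int p (int i * p ^ lam)) \<beta> = pmul p \<alpha> (pof_int p (p ^ i))"
    and "N + lam \<le> i"
  shows "p ^ N dvd int i * \<beta> N"
proof -
  define L where "L = N + lam"
  have "(int i * p ^ lam * \<beta> L) mod p ^ L = (\<alpha> L * p ^ i) mod p ^ L"
    using fun_cong[OF scaled, of L]
    by (simp add: pmul_def pof_int_def mod_mult_left_eq mod_mult_right_eq)
  also have "\<dots> = 0"
    using \<open>N + lam \<le> i\<close> by (simp add: L_def le_imp_power_dvd)
  finally have "p ^ lam * p ^ N dvd p ^ lam * (int i * \<beta> L)"
    by (simp add: L_def power_add mod_eq_0_iff_dvd ac_simps)
  then have "p ^ N dvd int i * \<beta> L"
    using \<open>p \<noteq> 0\<close> by simp
  moreover have "\<beta> N = \<beta> L mod p ^ N"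
    unfolding L_def by (rule padic_coherent[OF assms(2)]) simp
  ultimately show ?thesis
    by (simp add: dvd_eq_mod_eq_0 mod_mult_right_eq)
qed

lemma Mbound_gt:
  assumes "p > 1"
  shows "N + lam < Mbound p lam N"
proof -
  let ?good = "\<lambda>m::nat. 1 \<le> m \<and> real m - real lam - log (real_of_int p) (real m) > real N"
  define k where "k = Suc (N + lam)"
  have "Suc (N + lam) \<le> 2 ^ (N + lam)"
    by (rule Suc_leI[OF less_exp])
  then have "2 * k \<le> 2 ^ k"
    unfolding k_def power_Suc by (rule mult_le_mono2)
  then have "real (2 * k) \<le> 2 ^ k"
    by (metis of_nat_le_iff of_nat_numeral of_nat_power)
  also have "(2::real) ^ k \<le> real_of_int p ^ k"
    using assms by (intro power_mono) simp_all
  finally have "real (2 * k) \<le> real_of_int p ^ k" .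
  moreover have "0 < p ^ k"
    using assms by simp
  then have "real (nat (p ^ k)) = real_of_int p ^ k" "1 \<le> nat (p ^ k)"
    by simp_all
  moreover have "log (real_of_int p) (real_of_int p ^ k) = real k"
    using assms by simp
  moreover have "real k = real N + real lam + 1"
    by (simp add: k_def)
  ultimately have "?good (nat (p ^ k))"
    by simp
  then have "?good (Mbound p lam N)"
    unfolding Mbound_def by (rule LeastI)
  moreover have "log (real_of_int p) (real (Mbound p lam N)) \<ge> 0" if "1 \<le> Mbound p lam N"
    using assms that by simp
  ultimately show ?thesis by linarith
qed

lemma ps_approx_roots_congruent:
  fixes p :: int
  assumes "prime p" and b_Zp: "\<And>i. padic p (b i)" and "padic p x" "padic p y"
    and root_x: "ps_sums p b x s" "s N = 0" and root_y: "ps_sums p b y s'" "s' N = 0"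
    and high: "\<And>i. M < i \<Longrightarrow> p ^ N dvd int i * b i N"
    and val: "pval p (ps_partial p (ps_deriv p (ps_trunc b M)) y (Suc M)) = enat d" "d < N"
    and close: "enat d < pval p (psub p y x)"
  shows "enat (N - d) \<le> pval p (psub p x y)"
proof -
  obtain K0 where K0: "\<And>K. K0 \<le> K \<Longrightarrow> p ^ N dvd (\<Sum>i<K. b i N * x N ^ i)"
    using ps_sums_root_dvd[OF root_x] by blast
  obtain K1 where K1: "\<And>K. K1 \<le> K \<Longrightarrow> p ^ N dvd (\<Sum>i<K. b i N * y N ^ i)"
    using ps_sums_root_dvd[OF root_y] by blast
  define K where "K = K0 + K1 + M"
  define S where "S = (\<Sum>i<K. int (Suc i) * b (Suc i) N * y N ^ i)"
  have "padic p (ps_partial p (ps_deriv p (ps_trunc b M)) y (Suc M))"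
    by (intro padic_ps_partial padic_ps_deriv padic_ps_trunc b_Zp \<open>padic p y\<close>)
  from pval_eq_enat_dvd[OF this val]
  have "p ^ d dvd ps_partial p (ps_deriv p (ps_trunc b M)) y (Suc M) N"
    "\<not> p ^ Suc d dvd ps_partial p (ps_deriv p (ps_trunc b M)) y (Suc M) N" .
  moreover have "[ps_partial p (ps_deriv p (ps_trunc b M)) y (Suc M) N = S] (mod p ^ N)"
    unfolding S_def K_def by (intro ps_partial_deriv_trunc_cong high) simp_all
  moreover have "p ^ d dvd p ^ N" "p ^ Suc d dvd p ^ N"
    using \<open>d < N\<close> by (intro le_imp_power_dvd; simp)+
  ultimately have "p ^ d dvd S" "\<not> p ^ Suc d dvd S"
    by (metis cong_dvd_iff cong_dvd_modulus)+
  moreover have "p ^ Suc d dvd x N - y N"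
    using close pval_psub_ge_iff_dvd[OF \<open>padic p y\<close> \<open>padic p x\<close>, of "Suc d" N] \<open>d < N\<close>
    by (simp add: Suc_ile_eq dvd_diff_commute)
  moreover have "p ^ N dvd (\<Sum>i<Suc K. b i N * x N ^ i)"
    "p ^ N dvd (\<Sum>i<Suc K. b i N * y N ^ i)"
    unfolding K_def by (intro K0 K1; simp)+
  ultimately have "p ^ (N - d) dvd x N - y N"
    unfolding S_def by (intro sum_power_roots_congruent[OF \<open>prime p\<close>])
  then show ?thesis
    using pval_psub_ge_iff_dvd[OF \<open>padic p x\<close> \<open>padic p y\<close>, of "N - d" N] by simp
qed

theorem lemma3p6:
  fixes p :: int and a :: "nat \<Rightarrow> nat \<Rightarrow> int" and c :: "nat \<Rightarrow> int"
    and b :: "nat \<Rightarrow> nat \<Rightarrow> int" and N :: nat and r :: int and rt :: "nat \<Rightarrow> int"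
    and lam :: nat
  assumes prime: "prime p"
    and a_Zp: "\<And>i. padic p (a i)"
    and c_Zp: "padic p c"
    and lam_def: "plambda p a c = enat lam"
    and b_Zp: "\<And>i. padic p (b i)"
    and b0: "pmul p (pof_int p (p ^ lam)) (b 0) = c"
    and bi: "\<And>i. i \<ge> 1 \<Longrightarrow>
               pmul p (pof_int p (int i * p ^ lam)) (b i) = pmul p (a (i - 1)) (pof_int p (p ^ i))"
    and conv: "\<And>x. padic p x \<Longrightarrow> \<exists>s. ps_sums p b x s"
    and N_pos: "N \<ge> 1"
    and hensel: "hensel_at p N b r"
    and rt_Zp: "padic p rt"
    and rt_zero: "ps_sums p b rt (\<lambda>n. 0)"
    and rt_close: "pval p (psub p (pof_int p r) rt) >
        pval p (ps_partial p (ps_deriv p (ps_trunc b (Mbound p lam N))) (pof_int p r) (Suc (Mbound p lam N)))"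
  shows "pval p (psub p rt (pof_int p r)) \<ge>
        enat N - pval p (ps_partial p (ps_deriv p (ps_trunc b (Mbound p lam N))) (pof_int p r) (Suc (Mbound p lam N)))"
proof -
  define M where "M = Mbound p lam N"
  define D where "D = ps_partial p (ps_deriv p (ps_trunc b M)) (pof_int p r) (Suc M)"
  have "1 < p" using prime by (rule prime_gt_1_int)
  have high: "p ^ N dvd int i * b i N" if "M < i" for i
  proof -
    have "N + lam < M" unfolding M_def using Mbound_gt[OF \<open>1 < p\<close>] .
    with that show ?thesis
      using bi[of i] \<open>1 < p\<close> by (intro index_mult_coeff_dvd[OF _ b_Zp]) auto
  qed
  obtain s where "ps_sums p b (pof_int p r) s" "s N = 0"
    using hensel unfolding hensel_at_def by blast
  consider d where "pval p D = enat d" "d < N" | "enat N \<le> pval p D"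
    by (cases "pval p D") (auto, meson not_le)
  then show ?thesis
  proof cases
    case 1
    then have "enat (N - d) \<le> pval p (psub p rt (pof_int p r))"
      using rt_close unfolding D_def M_def[symmetric]
      by (intro ps_approx_roots_congruent[OF prime b_Zp rt_Zp padic_pof_int rt_zero _
            \<open>ps_sums p b (pof_int p r) s\<close> \<open>s N = 0\<close> high]) simp_all
    with 1 show ?thesis unfolding D_def M_def by simp
  next
    case 2
    then have "enat N - pval p D = 0" by (cases "pval p D") (simp_all add: zero_enat_def)
    then show ?thesis unfolding D_def M_def by simp
  qed
qed

end
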